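(* Let $k\ge4$ be even and let $G$ be a $k$-uniform hypergraph. Then the number of minimal canonical H-eigenvectors of the Laplacian tensor $\mathcal D-\mathcal A$ corresponding to the eigenvalue $0$, counted with $\mathbf x$ and $-\mathbf x$ identified, equals (number of even-bipartite connected components of $G$) $+$ (number of connected components of $G$) $-$ (number of singletons of $G$).
   Context: A $k$-uniform hypergraph $G=(V,E)$ has vertex set $V=[n]$ ($n\ge k$) and nonempty edge set $E$ of $k$-element subsets; $E_i=\{e\in E:i\in e\}$, $d_i=|E_i|$. A singleton is a vertex of degree $0$. Connected components are maximal sets of vertices pairwise joined by chains of edges with consecutive edges intersecting; each singleton is also a connected component. $\mathcal A$: $a_{i_1\dots i_k}=\frac1{(k-1)!}$ if $\{i_1,\dots,i_k\}\in E$, else $0$; $\mathcal D$ diagonal with $d_{i\dots i}=d_i$; so $((\mathcal D-\mathcal A)\mathbf x^{k-1})_i=d_ix_i^{k-1}-\sum_{e\in E_i}\prod_{j\in e\setminus\{i\}}x_j$. A nonzero $\mathbf x\in\mathbb C^n$ is an eigenvector of $\mathcal T$ for $\lambda$ if $(\mathcal T\mathbf x^{k-1})_i=\lambda x_i^{k-1}$ for all $i$; an H-eigenvector is a real eigenvector; it is canonical if $\max_i|x_i|=1$; an eigenvector of eigenvalue $0$ is minimal if no eigenvector of eigenvalue $0$ has support strictly contained in its support. Counting of even-bipartite connected components: each singleton component contributes $1$; each connected component $C$ with $|C|\ge2$ contributes the number of unordered partitions $\{S,T\}$ of $C$ with $S,T\ne\emptyset$ such that $|e\cap S|$ is even for every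 edge $e\subseteq C$. The number of even-bipartite connected components is the sum of these contributions. *)

theory Defs
  imports Complex_Main
begin

definition uniform_hypergraph :: "nat \<Rightarrow> nat \<Rightarrow> nat set set \<Rightarrow> bool" where
  "uniform_hypergraph n k E \<longleftrightarrow> n \<ge> k \<and> E \<noteq> {} \<and>
     (\<forall>e\<in>E. e \<subseteq> {1..n} \<and> card e = k)"

definition edges_at :: "nat set set \<Rightarrow> nat \<Rightarrow> nat set set" where
  "edges_at E i = {e\<in>E. i \<in> e}"

definition hdeg :: "nat set set \<Rightarrow> nat \<Rightarrow> nat" where
  "hdeg E i = card (edges_at E i)"

text \<open>Vectors in C^n are functions nat => complex vanishing outside {1..n}.
  The i-th entry of (D - A) x^(k-1).\<close>
definition lap_apply :: "nat \<Rightarrow> nat set set \<Rightarrow> (nat \<Rightarrow> complex) \<Rightarrow> nat \<Rightarrow> complex" where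
  "lap_apply k E x i = of_nat (hdeg E i) * x i ^ (k - 1)
      - (\<Sum>e\<in>edges_at E i. \<Prod>j\<in>e - {i}. x j)"

definition lap_eigvec :: "nat \<Rightarrow> nat \<Rightarrow> nat set set \<Rightarrow> complex \<Rightarrow> (nat \<Rightarrow> complex) \<Rightarrow> bool" where
  "lap_eigvec n k E lam x \<longleftrightarrow>
     (\<forall>i. i \<notin> {1..n} \<longrightarrow> x i = 0) \<and> (\<exists>i\<in>{1..n}. x i \<noteq> 0) \<and>
     (\<forall>i\<in>{1..n}. lap_apply k E x i = lam * x i ^ (k - 1))"

definition supp_vec :: "(nat \<Rightarrow> complex) \<Rightarrow> nat set" where
  "supp_vec x = {i. x i \<noteq> 0}"

definition is_H_vec :: "(nat \<Rightarrow> complex) \<Rightarrow> bool" where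
  "is_H_vec x \<longleftrightarrow> (\<forall>i. x i \<in> \<real>)"

definition canonical_vec :: "nat \<Rightarrow> (nat \<Rightarrow> complex) \<Rightarrow> bool" where
  "canonical_vec n x \<longleftrightarrow> Max ((\<lambda>i. norm (x i)) ` {1..n}) = 1"

definition minimal_zero_eigvec :: "nat \<Rightarrow> nat \<Rightarrow> nat set set \<Rightarrow> (nat \<Rightarrow> complex) \<Rightarrow> bool" where
  "minimal_zero_eigvec n k E x \<longleftrightarrow> lap_eigvec n k E 0 x \<and>
     \<not> (\<exists>y. lap_eigvec n k E 0 y \<and> supp_vec y \<subset> supp_vec x)"

definition min_can_H0 :: "nat \<Rightarrow> nat \<Rightarrow> nat set set \<Rightarrow> (nat \<Rightarrow> complex) set" where
  "min_can_H0 n k E = {x. minimal_zero_eigvec n k E x \<and> is_H_vec x \<and> canonical_vec n x}"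

definition hadj :: "nat set set \<Rightarrow> nat \<Rightarrow> nat \<Rightarrow> bool" where
  "hadj E i j \<longleftrightarrow> (\<exists>e\<in>E. i \<in> e \<and> j \<in> e)"

definition components :: "nat \<Rightarrow> nat set set \<Rightarrow> nat set set" where
  "components n E = (\<lambda>i. {j\<in>{1..n}. (hadj E)\<^sup>*\<^sup>* i j}) ` {1..n}"

definition singletons :: "nat \<Rightarrow> nat set set \<Rightarrow> nat set" where
  "singletons n E = {i\<in>{1..n}. hdeg E i = 0}"

definition even_partitions :: "nat set set \<Rightarrow> nat set \<Rightarrow> nat set set set" where
  "even_partitions E C = {{S, C - S} | S. S \<subseteq> C \<and> S \<noteq> {} \<and> S \<noteq> C \<and>
      (\<forall>e\<in>E. e \<subseteq> C \<longrightarrow> even (card (e \<inter> S)))}"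

definition comp_contrib :: "nat set set \<Rightarrow> nat set \<Rightarrow> nat" where
  "comp_contrib E C = (if card C = 1 then 1 else card (even_partitions E C))"

definition num_even_bipartite :: "nat \<Rightarrow> nat set set \<Rightarrow> nat" where
  "num_even_bipartite n E = (\<Sum>C\<in>components n E. comp_contrib E C)"

end

theory Submission
  imports Defs
begin

text \<open>The modulus of an eigenvector for the eigenvalue 0 is constant on every connected component:
  at a vertex where it is maximal, the eigen-equation together with the triangle inequality forces
  every other vertex of every edge through it to attain the maximum as well. Hence a minimal such
  eigenvector is supported on a single component \<open>C\<close>, and a canonical real one equals \<open>1\<close> on
  some \<open>S \<subseteq> C\<close> and \<open>-1\<close> on \<open>C - S\<close>. Since \<open>k - 1\<close> is odd, the eigen-equation at \<open>j\<close> then says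
  that the products of \<open>x\<close> over the edges through \<open>j\<close>, each of them \<open>\<plusminus>1\<close>, add up to the degree
  of \<open>j\<close>; so every edge \<open>e\<close> has \<open>(-1)^|e - S| = 1\<close>, i.e. \<open>|e \<inter> S|\<close> is even. Conversely every such
  \<open>S\<close> gives a minimal eigenvector, and identifying \<open>x\<close> with \<open>-x\<close> identifies \<open>S\<close> with \<open>C - S\<close>. So
  each component contributes its even partitions plus the trivial partition \<open>{\<emptyset>, C}\<close>, and the
  latter is already part of the even-bipartite count exactly for the singletons.\<close>

lemma sum_ge_card_mult_bound_imp_eq:
  fixes f :: "'a \<Rightarrow> real"
  assumes "finite A" and bound: "\<And>a. a \<in> A \<Longrightarrow> f a \<le> c"
    and "of_nat (card A) * c \<le> sum f A" and "a \<in> A"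
  shows "f a = c"
proof -
  have nonneg: "\<forall>a\<in>A. 0 \<le> c - f a" using bound by simp
  have "sum (\<lambda>a. c - f a) A \<le> 0" using assms(3) by (simp add: sum_subtractf)
  with nonneg have "sum (\<lambda>a. c - f a) A = 0" by (meson order_antisym sum_nonneg)
  with nonneg \<open>finite A\<close> \<open>a \<in> A\<close> show ?thesis by (simp add: sum_nonneg_eq_0_iff)
qed

lemma prod_eq_power_bound_imp_eq:
  fixes f :: "'a \<Rightarrow> real"
  assumes "finite A" and bound: "\<And>a. a \<in> A \<Longrightarrow> 0 \<le> f a \<and> f a \<le> m"
    and prod: "prod f A = m ^ card A" and "m > 0" and a: "a \<in> A"
  shows "f a = m"
proof (rule ccontr)
  assume "f a \<noteq> m"
  with bound[OF a] have less: "f a < m" by simp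
  have "prod f (A - {a}) \<le> (\<Prod>_\<in>A - {a}. m)"
    by (rule prod_mono) (use bound in auto)
  also have "\<dots> = m ^ (card A - 1)" using a \<open>finite A\<close> by simp
  finally have "f a * prod f (A - {a}) \<le> f a * m ^ (card A - 1)"
    using bound[OF a] by (intro mult_left_mono) simp_all
  then have "prod f A \<le> f a * m ^ (card A - 1)"
    using a \<open>finite A\<close> by (simp add: prod.remove)
  also have "\<dots> < m * m ^ (card A - 1)" using less \<open>m > 0\<close> by simp
  also have "\<dots> = m ^ card A"
    using a \<open>finite A\<close> by (cases "card A") auto
  finally show False using prod by simp
qed

lemma real_norm_eq_1_cases:
  fixes z :: complex
  assumes "z \<in> \<real>" and "norm z = 1"
  shows "z \<in> {1, -1}"
proof -
  obtain r where "z = of_real r" using \<open>z \<in> \<real>\<close> by (blast elim: Reals_cases)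
  with assms(2) show ?thesis by (auto simp: abs_if split: if_splits)
qed

lemma prod_in_plus_minus_one:
  "finite A \<Longrightarrow> (\<And>a. a \<in> A \<Longrightarrow> f a \<in> {1, -1}) \<Longrightarrow> prod f A \<in> {1, -1 :: complex}"
proof (induction A rule: finite_induct)
  case (insert a A)
  then have "f a \<in> {1, -1}" "prod f A \<in> {1, -1}" by simp_all
  then have "f a * prod f A \<in> {1, -1}" by auto
  with insert show ?case by simp
qed simp

definition sign_vec :: "nat set \<Rightarrow> nat set \<Rightarrow> nat \<Rightarrow> complex" where
  "sign_vec C S i = (if i \<in> S then 1 else if i \<in> C then -1 else 0)"

definition even_subset :: "nat set set \<Rightarrow> nat set \<Rightarrow> nat set \<Rightarrow> bool" where
  "even_subset E C S \<longleftrightarrow> S \<subseteq> C \<and> (\<forall>e\<in>E. e \<subseteq> C \<longrightarrow> even (card (e \<inter> S)))"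

lemma supp_vec_sign_vec: "S \<subseteq> C \<Longrightarrow> supp_vec (sign_vec C S) = C"
  by (auto simp: supp_vec_def sign_vec_def)

lemma uminus_sign_vec: "S \<subseteq> C \<Longrightarrow> - sign_vec C S = sign_vec C (C - S)"
  by (auto simp: sign_vec_def fun_eq_iff)

lemma sign_vec_eq_1_iff: "sign_vec C S i = 1 \<longleftrightarrow> i \<in> S"
  by (simp add: sign_vec_def)

lemma inj_on_sign_vec: "inj_on (sign_vec C) (Pow C)"
proof (rule inj_onI)
  fix S T assume "sign_vec C S = sign_vec C T"
  then have "i \<in> S \<longleftrightarrow> i \<in> T" for i by (metis sign_vec_eq_1_iff)
  then show "S = T" by blast
qed

lemma prod_sign_vec:
  assumes "finite e" and "e \<subseteq> C"
  shows "prod (sign_vec C S) e = (-1) ^ card (e - S)"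
proof -
  have "prod (sign_vec C S) e = (\<Prod>i\<in>e. if i \<in> S then 1 else -1)"
    using assms(2) by (intro prod.cong) (auto simp: sign_vec_def)
  also have "\<dots> = (\<Prod>i\<in>e \<inter> {i. i \<in> S}. 1) * (\<Prod>i\<in>e \<inter> - {i. i \<in> S}. -1)"
    by (rule prod.If_cases[OF \<open>finite e\<close>])
  also have "\<dots> = (-1) ^ card (e - S)"
    by (simp add: Diff_eq)
  finally show ?thesis .
qed

lemma pairs_of_even_subsets:
  "(\<lambda>S. {S, C - S}) ` Collect (even_subset E C) = insert {{}, C} (even_partitions E C)"
proof (intro equalityI subsetI)
  fix P assume "P \<in> (\<lambda>S. {S, C - S}) ` Collect (even_subset E C)"
  then obtain S where S: "even_subset E C S" and P: "P = {S, C - S}" by blast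
  show "P \<in> insert {{}, C} (even_partitions E C)"
  proof (cases "S = {} \<or> S = C")
    case True
    then show ?thesis using P by auto
  next
    case False
    then have "P \<in> even_partitions E C"
      unfolding even_partitions_def mem_Collect_eq using S P
      by (intro exI[of _ S]) (auto simp: even_subset_def)
    then show ?thesis by simp
  qed
next
  fix P assume "P \<in> insert {{}, C} (even_partitions E C)"
  then consider "P = {{}, C}" | S where "P = {S, C - S}" "even_subset E C S"
    unfolding even_partitions_def even_subset_def by auto
  then show "P \<in> (\<lambda>S. {S, C - S}) ` Collect (even_subset E C)"
  proof cases
    case 1
    moreover have "even_subset E C {}" by (simp add: even_subset_def)
    ultimately show ?thesis by (intro image_eqI[of _ _ "{}"]) auto
  qed auto
qed

lemma trivial_partition_notin_even_partitions: "{{}, C} \<notin> even_partitions E C"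
  unfolding even_partitions_def by (auto simp: doubleton_eq_iff)

lemma finite_even_partitions: "finite C \<Longrightarrow> finite (even_partitions E C)"
  by (rule finite_subset[of _ "Pow (Pow C)"]) (auto simp: even_partitions_def)

lemma even_partitions_singleton: "card C = 1 \<Longrightarrow> even_partitions E C = {}"
  by (auto simp: even_partitions_def card_1_singleton_iff subset_singleton_iff)

lemma card_sign_vec_pairs:
  assumes "finite C"
  shows "card ((\<lambda>x. {x, - x}) ` sign_vec C ` Collect (even_subset E C))
    = Suc (card (even_partitions E C))"
proof -
  have "(\<lambda>x. {x, - x}) ` sign_vec C ` Collect (even_subset E C)
      = image (sign_vec C) ` (\<lambda>S. {S, C - S}) ` Collect (even_subset E C)"
    by (auto simp: image_image even_subset_def uminus_sign_vec)
  moreover have "inj_on (image (sign_vec C)) ((\<lambda>S. {S, C - S}) ` Collect (even_subset E C))"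
    by (rule inj_on_subset[OF inj_on_image_Pow[OF inj_on_sign_vec]]) (auto simp: even_subset_def)
  ultimately show ?thesis
    using assms by (simp add: card_image pairs_of_even_subsets finite_even_partitions
        trivial_partition_notin_even_partitions)
qed

locale even_uniform_hypergraph =
  fixes n k :: nat and E :: "nat set set"
  assumes two_le_k: "2 \<le> k" and even_k: "even k" and uniform: "uniform_hypergraph n k E"
begin

lemma edge_subset: "e \<in> E \<Longrightarrow> e \<subseteq> {1..n}"
  using uniform by (auto simp: uniform_hypergraph_def)

lemma card_edge: "e \<in> E \<Longrightarrow> card e = k"
  using uniform by (auto simp: uniform_hypergraph_def)

lemma finite_edge: "e \<in> E \<Longrightarrow> finite e"
  using edge_subset finite_subset by blast

lemma finite_edges_at: "finite (edges_at E i)"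
proof -
  have "E \<subseteq> Pow {1..n}" using edge_subset by blast
  then have "finite E" by (rule finite_subset) simp
  then show ?thesis by (simp add: edges_at_def)
qed

lemma edge_other_vertex:
  assumes "e \<in> E" obtains l where "l \<in> e" "l \<noteq> i"
proof -
  have "\<not> e \<subseteq> {i}"
    using card_mono[of "{i}" e] card_edge[OF assms] two_le_k by auto
  then show ?thesis using that by blast
qed

lemma odd_k_minus_1: "odd (k - 1)"
  using even_k two_le_k by simp

definition comp :: "nat \<Rightarrow> nat set" where
  "comp i = {j\<in>{1..n}. (hadj E)\<^sup>*\<^sup>* i j}"

lemma components_eq: "components n E = comp ` {1..n}"
  by (simp add: components_def comp_def)

lemma comp_self: "i \<in> {1..n} \<Longrightarrow> i \<in> comp i"
  by (simp add: comp_def)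

lemma comp_subset: "comp i \<subseteq> {1..n}"
  by (auto simp: comp_def)

lemma finite_comp: "finite (comp i)"
  using comp_subset finite_subset by blast

lemma comp_eq: "j \<in> comp i \<Longrightarrow> comp j = comp i"
proof -
  have "symp (hadj E)" by (auto simp: symp_def hadj_def)
  moreover assume "j \<in> comp i"
  ultimately have "(hadj E)\<^sup>*\<^sup>* i j" "(hadj E)\<^sup>*\<^sup>* j i"
    by (auto simp: comp_def dest: sympD[OF symp_rtranclp])
  then show ?thesis unfolding comp_def by (auto intro: rtranclp_trans)
qed

lemma disjoint_comp: "i \<in> {1..n} \<Longrightarrow> i \<notin> comp i' \<Longrightarrow> comp i \<inter> comp i' = {}"
  using comp_eq comp_self by blast

lemma edge_subset_comp:
  assumes "e \<in> E" "j \<in> e" "j \<in> comp i" shows "e \<subseteq> comp i"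
proof
  fix l assume "l \<in> e"
  with assms have "hadj E j l" by (auto simp: hadj_def)
  moreover have "l \<in> {1..n}" using edge_subset[OF assms(1)] \<open>l \<in> e\<close> by blast
  ultimately show "l \<in> comp i" using assms(3) by (auto simp: comp_def)
qed

lemma edges_at_subset_comp: "e \<in> edges_at E i \<Longrightarrow> i \<in> {1..n} \<Longrightarrow> e \<subseteq> comp i"
  using edge_subset_comp comp_self by (auto simp: edges_at_def)

lemma norm_eq_at_local_max:
  assumes eig: "lap_eigvec n k E 0 x" and j: "j \<in> {1..n}"
    and max: "\<And>e l. e \<in> edges_at E j \<Longrightarrow> l \<in> e \<Longrightarrow> norm (x l) \<le> norm (x j)"
    and e: "e \<in> edges_at E j" and l: "l \<in> e"
  shows "norm (x l) = norm (x j)"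
proof (cases "x j = 0")
  case True
  with max[OF e l] show ?thesis by simp
next
  case False
  define m where "m = norm (x j)"
  define P where "P e = (\<Prod>l\<in>e - {j}. norm (x l))" for e
  have card_e: "card (e - {j}) = k - 1" if "e \<in> edges_at E j" for e
    using that card_edge finite_edge by (simp add: edges_at_def)
  have P_le: "P e \<le> m ^ (k - 1)" if "e \<in> edges_at E j" for e
  proof -
    have "P e \<le> (\<Prod>_\<in>e - {j}. m)"
      unfolding P_def m_def by (rule prod_mono) (use max[OF that] in simp)
    then show ?thesis using card_e[OF that] by simp
  qed
  have "of_nat (card (edges_at E j)) * m ^ (k - 1) = norm (of_nat (hdeg E j) * x j ^ (k - 1))"
    by (simp add: hdeg_def m_def norm_mult norm_power)
  also have "\<dots> = norm (\<Sum>e\<in>edges_at E j. \<Prod>l\<in>e - {j}. x l)"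
    using eig j by (simp add: lap_eigvec_def lap_apply_def)
  also have "\<dots> \<le> (\<Sum>e\<in>edges_at E j. norm (\<Prod>l\<in>e - {j}. x l))"
    by (rule norm_sum)
  also have "\<dots> = sum P (edges_at E j)"
    by (simp add: P_def prod_norm)
  finally have "of_nat (card (edges_at E j)) * m ^ (k - 1) \<le> sum P (edges_at E j)" .
  with P_le e have "P e = m ^ (k - 1)"
    by (intro sum_ge_card_mult_bound_imp_eq[OF finite_edges_at])
  then have "(\<Prod>l\<in>e - {j}. norm (x l)) = m ^ card (e - {j})"
    by (simp add: P_def card_e[OF e])
  then have "norm (x l) = m" if "l \<in> e - {j}"
    using finite_edge[of e] e max[OF e] False that
    by (intro prod_eq_power_bound_imp_eq[of "e - {j}" "\<lambda>l. norm (x l)"])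
      (auto simp: m_def edges_at_def)
  with l show ?thesis by (cases "l = j") (auto simp: m_def)
qed

lemma norm_eq_on_comp:
  assumes eig: "lap_eigvec n k E 0 x" and i: "i \<in> {1..n}" and j: "j \<in> comp i"
  shows "norm (x j) = norm (x i)"
proof -
  define m where "m = Max ((\<lambda>j. norm (x j)) ` comp i)"
  have le_m: "norm (x j) \<le> m" if "j \<in> comp i" for j
    unfolding m_def using that finite_comp by simp
  obtain j0 where j0: "j0 \<in> comp i" "norm (x j0) = m"
    using Max_in[of "(\<lambda>j. norm (x j)) ` comp i"] finite_comp comp_self[OF i]
    unfolding m_def by fastforce
  have "l \<in> comp i \<and> norm (x l) = m" if "(hadj E)\<^sup>*\<^sup>* j0 l" for l
    using that
  proof (induction rule: rtranclp_induct)
    case base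
    then show ?case using j0 by simp
  next
    case (step j l)
    then have j: "j \<in> comp i" "norm (x j) = m" by simp_all
    then have in_comp: "e \<subseteq> comp i" if "e \<in> edges_at E j" for e
      using that edge_subset_comp[OF _ _ j(1)] by (auto simp: edges_at_def)
    obtain e where e: "e \<in> edges_at E j" "l \<in> e"
      using step.hyps(2) by (auto simp: hadj_def edges_at_def)
    have "norm (x l) = norm (x j)"
    proof (rule norm_eq_at_local_max[OF eig _ _ e])
      show "j \<in> {1..n}" using j(1) comp_subset by blast
      show "norm (x l') \<le> norm (x j)" if "e' \<in> edges_at E j" "l' \<in> e'" for e' l'
        using le_m in_comp that j(2) by blast
    qed
    then show ?case using in_comp[OF e(1)] e(2) j(2) by auto
  qed
  moreover have "(hadj E)\<^sup>*\<^sup>* j0 l" if "l \<in> comp i" for l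
    using that comp_eq[OF j0(1)] by (auto simp: comp_def)
  ultimately show ?thesis using j comp_self[OF i] by metis
qed

lemma lap_apply_cong:
  assumes "i \<in> {1..n}" and "\<And>l. l \<in> comp i \<Longrightarrow> x l = y l"
  shows "lap_apply k E x i = lap_apply k E y i"
proof -
  have "(\<Prod>j\<in>e - {i}. x j) = (\<Prod>j\<in>e - {i}. y j)" if "e \<in> edges_at E i" for e
    using edges_at_subset_comp[OF that assms(1)] assms(2) by (intro prod.cong) auto
  then show ?thesis using assms comp_self by (simp add: lap_apply_def)
qed

lemma lap_apply_vanishing:
  assumes "i \<in> {1..n}" and "\<And>l. l \<in> comp i \<Longrightarrow> x l = 0"
  shows "lap_apply k E x i = 0"
proof -
  have "(\<Prod>j\<in>e - {i}. (0::complex)) = 0" if "e \<in> edges_at E i" for e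
  proof -
    from that have "e \<in> E" by (simp add: edges_at_def)
    then obtain l where "l \<in> e" "l \<noteq> i" by (rule edge_other_vertex)
    with finite_edge[OF \<open>e \<in> E\<close>] show ?thesis by (intro prod_zero) auto
  qed
  then have "lap_apply k E (\<lambda>_. 0) i = 0"
    using two_le_k by (simp add: lap_apply_def del: prod_constant)
  with lap_apply_cong[OF assms(1), of x "\<lambda>_. 0"] assms(2) show ?thesis by simp
qed

lemma restrict_comp_eigvec:
  assumes eig: "lap_eigvec n k E 0 x" and i0: "i0 \<in> {1..n}" and "x i0 \<noteq> 0"
  shows "lap_eigvec n k E 0 (\<lambda>j. if j \<in> comp i0 then x j else 0)"
proof -
  let ?y = "\<lambda>j. if j \<in> comp i0 then x j else 0"
  have "lap_apply k E ?y i = 0" if i: "i \<in> {1..n}" for i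
  proof (cases "i \<in> comp i0")
    case True
    then have "lap_apply k E ?y i = lap_apply k E x i"
      using comp_eq[OF True] by (intro lap_apply_cong[OF i]) auto
    also have "\<dots> = 0" using eig i by (simp add: lap_eigvec_def)
    finally show ?thesis .
  next
    case False
    then show ?thesis using disjoint_comp[OF i False] by (intro lap_apply_vanishing[OF i]) auto
  qed
  moreover have "?y i = 0" if "i \<notin> {1..n}" for i
    using that comp_subset[of i0] by auto
  ultimately show ?thesis
    using i0 comp_self[OF i0] \<open>x i0 \<noteq> 0\<close> unfolding lap_eigvec_def by auto
qed

lemma lap_apply_sign_eq_0_iff:
  assumes j: "j \<in> {1..n}" and sign: "\<And>l. l \<in> comp j \<Longrightarrow> x l \<in> {1, -1}"
  shows "lap_apply k E x j = 0 \<longleftrightarrow> (\<forall>e\<in>edges_at E j. prod x e = 1)"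
proof -
  let ?A = "edges_at E j"
  define r where "r e = Re (prod x e)" for e
  have xj: "x j \<in> {1, -1}" using sign comp_self[OF j] by blast
  then have xj_sq: "x j * x j = 1" and xj_pow: "x j ^ (k - 1) = x j"
    using odd_k_minus_1 by auto
  have prod_sign: "prod x e \<in> {1, -1}" if "e \<in> ?A" for e
    using edges_at_subset_comp[OF that j] sign finite_edge that
    by (intro prod_in_plus_minus_one) (auto simp: edges_at_def)
  have prod_r: "prod x e = of_real (r e)" and r_le: "r e \<le> 1" if "e \<in> ?A" for e
    using prod_sign[OF that] by (auto simp: r_def)
  have rest: "(\<Prod>l\<in>e - {j}. x l) = x j * of_real (r e)" if "e \<in> ?A" for e
  proof -
    have "(\<Prod>l\<in>e - {j}. x l) = x j * (x j * (\<Prod>l\<in>e - {j}. x l))"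
      by (simp add: mult.assoc[symmetric] xj_sq)
    also have "x j * (\<Prod>l\<in>e - {j}. x l) = prod x e"
      using that finite_edge by (auto simp: edges_at_def prod.remove)
    finally show ?thesis using prod_r[OF that] by simp
  qed
  have "lap_apply k E x j = of_nat (card ?A) * x j - (\<Sum>e\<in>?A. x j * of_real (r e))"
    unfolding lap_apply_def hdeg_def xj_pow using rest by simp
  also have "\<dots> = x j * of_real (of_nat (card ?A) - sum r ?A)"
    by (simp add: sum_distrib_left of_real_sum algebra_simps)
  finally have "lap_apply k E x j = 0 \<longleftrightarrow> of_nat (card ?A) - sum r ?A = 0"
    using xj by (simp only: mult_eq_0_iff of_real_eq_0_iff) auto
  also have "\<dots> \<longleftrightarrow> of_nat (card ?A) * 1 \<le> sum r ?A"
    using sum_mono[of ?A r "\<lambda>_. 1"] r_le by force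
  also have "\<dots> \<longleftrightarrow> (\<forall>e\<in>?A. r e = 1)"
    using sum_ge_card_mult_bound_imp_eq[OF finite_edges_at r_le] by auto
  also have "\<dots> \<longleftrightarrow> (\<forall>e\<in>?A. prod x e = 1)"
    using prod_r by (auto simp: r_def)
  finally show ?thesis .
qed

lemma prod_sign_vec_eq_1_iff:
  assumes "e \<in> E" and "e \<subseteq> C"
  shows "prod (sign_vec C S) e = 1 \<longleftrightarrow> even (card (e \<inter> S))"
proof -
  have "card (e \<inter> S) + card (e - S) = k"
    using card_Int_Diff[OF finite_edge[OF assms(1)]] card_edge[OF assms(1)] by simp
  then have "even (card (e - S)) \<longleftrightarrow> even (card (e \<inter> S))" using even_k by presburger
  then show ?thesis
    using prod_sign_vec[OF finite_edge[OF assms(1)] assms(2)] by (cases "even (card (e - S))") auto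
qed

lemma comp_subset_supp_vec:
  assumes "lap_eigvec n k E 0 x" and "i \<in> {1..n}" and "x i \<noteq> 0"
  shows "comp i \<subseteq> supp_vec x"
proof
  fix j assume "j \<in> comp i"
  then have "norm (x j) = norm (x i)" by (rule norm_eq_on_comp[OF assms(1,2)])
  with assms(3) show "j \<in> supp_vec x" by (auto simp: supp_vec_def)
qed

lemma sign_vec_eigvec:
  assumes i0: "i0 \<in> {1..n}" and S: "even_subset E (comp i0) S"
  shows "lap_eigvec n k E 0 (sign_vec (comp i0) S)"
proof -
  let ?C = "comp i0" and ?x = "sign_vec (comp i0) S"
  have SC: "S \<subseteq> ?C" using S by (simp add: even_subset_def)
  have "lap_apply k E ?x i = 0" if i: "i \<in> {1..n}" for i
  proof (cases "i \<in> ?C")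
    case True
    then have C: "comp i = ?C" by (rule comp_eq)
    have sign: "?x l \<in> {1, -1}" if "l \<in> comp i" for l
      using that C SC by (auto simp: sign_vec_def)
    have "prod ?x e = 1" if "e \<in> edges_at E i" for e
    proof -
      have "e \<in> E" "e \<subseteq> ?C"
        using that edges_at_subset_comp[OF that i] C by (auto simp: edges_at_def)
      with S show ?thesis by (simp add: prod_sign_vec_eq_1_iff even_subset_def)
    qed
    then show ?thesis by (simp add: lap_apply_sign_eq_0_iff[OF i sign])
  next
    case False
    show ?thesis
    proof (rule lap_apply_vanishing[OF i])
      fix l assume "l \<in> comp i"
      then have "l \<notin> ?C" using disjoint_comp[OF i False] by blast
      then show "?x l = 0" using SC by (auto simp: sign_vec_def)
    qed
  qed
  moreover have "?x i = 0" if "i \<notin> {1..n}" for i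
    using that comp_subset[of i0] SC by (auto simp: sign_vec_def)
  moreover have "?x i0 \<noteq> 0" using comp_self[OF i0] by (simp add: sign_vec_def)
  ultimately show ?thesis
    unfolding lap_eigvec_def using i0 by auto
qed

lemma sign_vec_in_min_can_H0:
  assumes i0: "i0 \<in> {1..n}" and S: "even_subset E (comp i0) S"
  shows "sign_vec (comp i0) S \<in> min_can_H0 n k E"
proof -
  let ?C = "comp i0" and ?x = "sign_vec (comp i0) S"
  have supp: "supp_vec ?x = ?C" using S by (simp add: even_subset_def supp_vec_sign_vec)
  have "\<not> supp_vec y \<subset> ?C" if y: "lap_eigvec n k E 0 y" for y
  proof
    assume less: "supp_vec y \<subset> ?C"
    obtain i where i: "i \<in> {1..n}" "y i \<noteq> 0" using y by (auto simp: lap_eigvec_def)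
    with less have "comp i = ?C" by (intro comp_eq) (auto simp: supp_vec_def)
    with less comp_subset_supp_vec[OF y i] show False by blast
  qed
  then have "minimal_zero_eigvec n k E ?x"
    using sign_vec_eigvec[OF assms] supp by (auto simp: minimal_zero_eigvec_def)
  moreover have "is_H_vec ?x" by (simp add: is_H_vec_def sign_vec_def)
  moreover have "Max ((\<lambda>i. norm (?x i)) ` {1..n}) = 1"
  proof (rule Max_eqI)
    show "1 \<in> (\<lambda>i. norm (?x i)) ` {1..n}"
      using i0 comp_self[OF i0] by (intro image_eqI[of _ _ i0]) (auto simp: sign_vec_def)
  qed (auto simp: sign_vec_def)
  ultimately show ?thesis by (simp add: min_can_H0_def canonical_vec_def)
qed

lemma minimal_zero_eigvec_vanishes_off_comp:
  assumes "minimal_zero_eigvec n k E x" and "i0 \<in> {1..n}" and "x i0 \<noteq> 0" and "j \<notin> comp i0"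
  shows "x j = 0"
proof -
  let ?y = "\<lambda>j. if j \<in> comp i0 then x j else 0"
  have "lap_eigvec n k E 0 ?y"
    using assms(1-3) by (intro restrict_comp_eigvec) (simp_all add: minimal_zero_eigvec_def)
  then have "\<not> supp_vec ?y \<subset> supp_vec x"
    using assms(1) by (auto simp: minimal_zero_eigvec_def)
  with assms(4) show ?thesis by (auto simp: supp_vec_def split: if_splits)
qed

lemma min_can_H0_sign_on_comp:
  assumes x: "x \<in> min_can_H0 n k E" and i0: "i0 \<in> {1..n}" "x i0 \<noteq> 0" and j: "j \<in> comp i0"
  shows "x j \<in> {1, -1}"
proof -
  have minimal: "minimal_zero_eigvec n k E x" and real: "\<And>i. x i \<in> \<real>"
    and canonical: "Max ((\<lambda>i. norm (x i)) ` {1..n}) = 1"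
    using x by (auto simp: min_can_H0_def is_H_vec_def canonical_vec_def)
  then have eig: "lap_eigvec n k E 0 x" by (simp add: minimal_zero_eigvec_def)
  have on_C: "norm (x j) = norm (x i0)" if "j \<in> comp i0" for j
    using norm_eq_on_comp[OF eig i0(1) that] .
  have "Max ((\<lambda>i. norm (x i)) ` {1..n}) = norm (x i0)"
  proof (rule Max_eqI)
    fix r assume "r \<in> (\<lambda>i. norm (x i)) ` {1..n}"
    then obtain i where "r = norm (x i)" by blast
    then show "r \<le> norm (x i0)"
      using on_C minimal_zero_eigvec_vanishes_off_comp[OF minimal i0] by (cases "i \<in> comp i0") auto
  qed (use i0 in auto)
  with canonical on_C[OF j] have "norm (x j) = 1" by simp
  then show ?thesis using real_norm_eq_1_cases[OF real] by blast
qed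

lemma min_can_H0_sign_vec:
  assumes x: "x \<in> min_can_H0 n k E"
  obtains i0 S where "i0 \<in> {1..n}" "even_subset E (comp i0) S" "x = sign_vec (comp i0) S"
proof -
  have minimal: "minimal_zero_eigvec n k E x" using x by (simp add: min_can_H0_def)
  then have eig: "lap_eigvec n k E 0 x" by (simp add: minimal_zero_eigvec_def)
  then obtain i0 where i0: "i0 \<in> {1..n}" "x i0 \<noteq> 0" by (auto simp: lap_eigvec_def)
  let ?C = "comp i0"
  note sign = min_can_H0_sign_on_comp[OF x i0]
  define S where "S = {j\<in>?C. x j = 1}"
  have SC: "S \<subseteq> ?C" by (auto simp: S_def)
  have x_eq: "x = sign_vec ?C S"
  proof
    fix j show "x j = sign_vec ?C S j"
      using sign[of j] minimal_zero_eigvec_vanishes_off_comp[OF minimal i0, of j]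
      by (cases "j \<in> ?C") (auto simp: S_def sign_vec_def)
  qed
  have "even (card (e \<inter> S))" if e: "e \<in> E" "e \<subseteq> ?C" for e
  proof -
    obtain j where j: "j \<in> e" using edge_other_vertex[OF e(1)] by blast
    with e have C: "comp j = ?C" and j_range: "j \<in> {1..n}"
      using comp_eq comp_subset by blast+
    have "lap_apply k E x j = 0" using eig j_range by (simp add: lap_eigvec_def)
    then have "\<forall>e\<in>edges_at E j. prod x e = 1"
      using lap_apply_sign_eq_0_iff[OF j_range] sign C by simp
    with e j have "prod (sign_vec ?C S) e = 1" by (simp add: edges_at_def x_eq)
    then show ?thesis using prod_sign_vec_eq_1_iff[OF e] by simp
  qed
  then have "even_subset E ?C S" using SC by (simp add: even_subset_def)
  then show ?thesis using that i0(1) x_eq by blast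
qed

lemma min_can_H0_eq:
  "min_can_H0 n k E = (\<Union>C\<in>components n E. sign_vec C ` Collect (even_subset E C))"
proof (intro equalityI subsetI)
  fix x assume "x \<in> min_can_H0 n k E"
  then obtain i0 S where "i0 \<in> {1..n}" "even_subset E (comp i0) S" "x = sign_vec (comp i0) S"
    by (rule min_can_H0_sign_vec)
  then show "x \<in> (\<Union>C\<in>components n E. sign_vec C ` Collect (even_subset E C))"
    unfolding components_eq by blast
next
  fix x assume "x \<in> (\<Union>C\<in>components n E. sign_vec C ` Collect (even_subset E C))"
  then obtain i0 S where "i0 \<in> {1..n}" "even_subset E (comp i0) S" "x = sign_vec (comp i0) S"
    unfolding components_eq by blast
  then show "x \<in> min_can_H0 n k E" using sign_vec_in_min_can_H0 by blast
qed

lemma card_pairs_min_can_H0: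
  "card ((\<lambda>x. {x, - x}) ` min_can_H0 n k E)
    = (\<Sum>C\<in>components n E. Suc (card (even_partitions E C)))"
proof -
  let ?pairs = "\<lambda>C. (\<lambda>x. {x, - x}) ` sign_vec C ` Collect (even_subset E C)"
  have finite_C: "finite C" if "C \<in> components n E" for C
    using that finite_comp by (auto simp: components_eq)
  have "finite (?pairs C)" if "C \<in> components n E" for C
  proof -
    have "Collect (even_subset E C) \<subseteq> Pow C" by (auto simp: even_subset_def)
    then show ?thesis using finite_C[OF that] by (auto intro: finite_subset)
  qed
  moreover have "?pairs C1 \<inter> ?pairs C2 = {}" if "C1 \<noteq> C2" for C1 C2
  proof (rule ccontr)
    assume "?pairs C1 \<inter> ?pairs C2 \<noteq> {}"
    then obtain P where "P \<in> ?pairs C1" "P \<in> ?pairs C2" by blast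
    then obtain S1 S2 where S: "even_subset E C1 S1" "even_subset E C2 S2"
      and "{sign_vec C1 S1, - sign_vec C1 S1} = {sign_vec C2 S2, - sign_vec C2 S2}"
      by auto
    then have "sign_vec C1 S1 = sign_vec C2 S2 \<or> sign_vec C1 S1 = - sign_vec C2 S2"
      by (auto simp: doubleton_eq_iff)
    then have "supp_vec (sign_vec C1 S1) = supp_vec (sign_vec C2 S2)"
      by (auto simp: supp_vec_def)
    with S that show False by (simp add: supp_vec_sign_vec even_subset_def)
  qed
  ultimately have "card (\<Union>C\<in>components n E. ?pairs C) = (\<Sum>C\<in>components n E. card (?pairs C))"
    by (intro card_UN_disjoint) (simp_all add: components_eq)
  also have "\<dots> = (\<Sum>C\<in>components n E. Suc (card (even_partitions E C)))"
    using finite_C by (intro sum.cong) (simp_all add: card_sign_vec_pairs)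
  finally show ?thesis by (simp add: min_can_H0_eq image_UN)
qed

lemma comp_eq_singleton_iff:
  assumes i: "i \<in> {1..n}"
  shows "comp i = {i} \<longleftrightarrow> hdeg E i = 0"
proof
  assume C: "comp i = {i}"
  have "e \<notin> edges_at E i" for e
  proof
    assume "e \<in> edges_at E i"
    then have e: "e \<in> E" "i \<in> e" by (simp_all add: edges_at_def)
    obtain l where "l \<in> e" "l \<noteq> i" using e(1) by (rule edge_other_vertex)
    moreover have "e \<subseteq> {i}" using edge_subset_comp[OF e comp_self[OF i]] C by simp
    ultimately show False by blast
  qed
  then have "edges_at E i = {}" by blast
  then show "hdeg E i = 0" by (simp add: hdeg_def)
next
  assume "hdeg E i = 0"
  then have "edges_at E i = {}" using finite_edges_at by (simp add: hdeg_def)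
  then have no_adj: "\<not> hadj E i j" for j by (auto simp: hadj_def edges_at_def)
  have "j = i" if "(hadj E)\<^sup>*\<^sup>* i j" for j
    using that by (rule converse_rtranclpE) (simp_all add: no_adj)
  then show "comp i = {i}" using comp_self[OF i] by (auto simp: comp_def)
qed

lemma singleton_components:
  "{C\<in>components n E. card C = 1} = (\<lambda>i. {i}) ` singletons n E"
proof (intro equalityI subsetI)
  fix C assume "C \<in> {C\<in>components n E. card C = 1}"
  then obtain i where i: "i \<in> {1..n}" and C: "C = comp i" "card (comp i) = 1"
    by (auto simp: components_eq)
  then have "comp i = {i}" using comp_self[OF i] by (auto simp: card_1_singleton_iff)
  with i C show "C \<in> (\<lambda>i. {i}) ` singletons n E"
    by (auto simp: singletons_def comp_eq_singleton_iff)
next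
  fix C assume "C \<in> (\<lambda>i. {i}) ` singletons n E"
  then obtain i where i: "i \<in> {1..n}" "hdeg E i = 0" and C: "C = {i}"
    by (auto simp: singletons_def)
  then have "C = comp i" using comp_eq_singleton_iff[OF i(1)] by simp
  with i C show "C \<in> {C\<in>components n E. card C = 1}"
    by (auto simp: components_eq)
qed

lemma num_even_bipartite_eq:
  "num_even_bipartite n E = (\<Sum>C\<in>components n E. card (even_partitions E C)) + card (singletons n E)"
proof -
  have "num_even_bipartite n E
      = (\<Sum>C\<in>components n E. card (even_partitions E C) + (if card C = 1 then 1 else 0))"
    unfolding num_even_bipartite_def comp_contrib_def
    by (intro sum.cong) (auto simp: even_partitions_singleton)
  also have "\<dots> = (\<Sum>C\<in>components n E. card (even_partitions E C))
      + card {C\<in>components n E. card C = 1}"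
    by (simp add: sum.distrib sum.If_cases components_eq Int_def conj_commute)
  also have "card {C\<in>components n E. card C = 1} = card (singletons n E)"
    unfolding singleton_components by (rule card_image) (simp add: inj_on_def)
  finally show ?thesis .
qed

end

theorem proposition5p2:
  fixes n k :: nat and E :: "nat set set"
  assumes "k \<ge> 4" and "even k" and "uniform_hypergraph n k E"
  shows "card ((\<lambda>x. {x, - x}) ` min_can_H0 n k E)
         = num_even_bipartite n E + card (components n E) - card (singletons n E)"
proof -
  interpret even_uniform_hypergraph n k E
    using assms by unfold_locales simp_all
  have "card ((\<lambda>x. {x, - x}) ` min_can_H0 n k E)
      = card (components n E) + (\<Sum>C\<in>components n E. card (even_partitions E C))"
    by (simp add: card_pairs_min_can_H0 sum_Suc)
  then show ?thesis by (simp add: num_even_bipartite_eq)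
qed

end
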